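(* Let the numbers $a,k,n,s$ satisfy $k\geq 2$, $s\geq 1$ and $n-s\geq 4k^3+4|a|(k-1)$. Let the real sequence $x_0,\ldots,x_s$ satisfy \[ x_0\geq \frac{k-1}{2}+\sqrt{kn-a} \] and \[ x_{i+1}\geq x_i\left(1-\frac{1}{x_i^2/(k-1)+n-i-k}\right)\quad\text{for } 0\leq i<s. \] Then for every $i=1,\ldots,s$, \[ x_i\geq\frac{k-1}{2}+\sqrt{k(n-i)-a+1/2}. \] *)

theory Defs
  imports Complex_Main
begin

end

theory Submission
  imports Defs
begin

text \<open>Write \<open>c = (k - 1)/2\<close>. The recursion map \<open>y \<mapsto> y (1 - 1/(y\<^sup>2/(k-1) + m))\<close> is
  increasing for \<open>y \<ge> 0\<close>, so by induction it suffices to apply it to the bound \<open>c + u\<close> itself,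
  where \<open>u\<^sup>2 = k N - a + e\<close>. The map lowers \<open>c + u\<close> by \<open>(c + u)/D\<close>, \<open>D\<close> being the denominator,
  while lowering \<open>u\<^sup>2\<close> by \<open>d = k - 1/2 + e\<close> lowers \<open>u\<close> by at most \<open>d/(2u)\<close> (concavity of the
  square root). So the step amounts to the polynomial inequality \<open>2 u (c + u) \<le> d D\<close>, which holds
  once \<open>N\<close> is large compared to \<open>k\<^sup>3\<close> and \<open>|a| k\<close>. The slack \<open>e = 1/2\<close> is gained in the first
  step (\<open>e = 0\<close>, \<open>d = k - 1/2\<close>) and then kept (\<open>e = 1/2\<close>, \<open>d = k\<close>).\<close>

definition step_map :: "real \<Rightarrow> real \<Rightarrow> real \<Rightarrow> real" where
  "step_map K m y = y * (1 - 1 / (y\<^sup>2 / K + m))"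

lemma step_map_mono:
  fixes K m y z :: real
  assumes "K > 0" "m \<ge> 1" "0 \<le> y" "y \<le> z"
  shows "step_map K m y \<le> step_map K m z"
proof -
  define Dy where "Dy = y\<^sup>2 / K + m"
  define Dz where "Dz = z\<^sup>2 / K + m"
  have Dy: "Dy \<ge> 1" and Dz: "Dz \<ge> m" using assms by (auto simp: Dy_def Dz_def add_increasing)
  have "Dz * 1 \<le> Dz * Dy" using Dy Dz assms by (intro mult_left_mono) auto
  moreover have "0 \<le> z * y / K" using assms by simp
  ultimately have "m - z * y / K \<le> Dz * Dy" using Dz by linarith
  then have "(m - z * y / K) / (Dz * Dy) \<le> 1" using Dy Dz assms by (simp add: divide_le_eq_1)
  then have "0 \<le> (z - y) * (1 - (m - z * y / K) / (Dz * Dy))" using assms by simp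
  moreover have "step_map K m z - step_map K m y = (z - y) * (1 - (m - z * y / K) / (Dz * Dy))"
  proof -
    have "z * Dy - y * Dz = (z - y) * (m - z * y / K)"
      using assms by (simp add: Dy_def Dz_def field_simps power2_eq_square)
    moreover have "step_map K m z - step_map K m y = (z - y) - (z * Dy - y * Dz) / (Dz * Dy)"
      using Dy Dz assms unfolding step_map_def Dy_def[symmetric] Dz_def[symmetric]
      by (simp add: field_simps)
    ultimately show ?thesis by (simp add: right_diff_distrib)
  qed
  ultimately show ?thesis by linarith
qed

lemma sqrt_square_diff_le:
  fixes u d :: real
  assumes "u > 0" "0 \<le> d" "d \<le> u\<^sup>2"
  shows "sqrt (u\<^sup>2 - d) \<le> u - d / (2 * u)"
proof -
  have "0 \<le> u - d / (2 * u)" using assms by (simp add: field_simps power2_eq_square)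
  moreover have "u\<^sup>2 - d \<le> (u - d / (2 * u))\<^sup>2"
    using assms by (simp add: field_simps power2_eq_square)
  ultimately show ?thesis by (rule real_le_lsqrt)
qed

lemma add_sqrt_diff_le_mult_one_minus_inverse:
  fixes c u d D :: real
  assumes "c \<ge> 0" "u > 0" "0 \<le> d" "d \<le> u\<^sup>2" "D > 0" "2 * u * (c + u) \<le> d * D"
  shows "c + sqrt (u\<^sup>2 - d) \<le> (c + u) * (1 - 1 / D)"
proof -
  have "(c + u) / D \<le> d / (2 * u)" using assms by (simp add: field_simps)
  then show ?thesis using sqrt_square_diff_le[of u d] assms by (simp add: algebra_simps)
qed

lemma denominator_bound:
  fixes r N a e u :: real
  assumes r: "r \<ge> 2" and u: "u \<ge> 0" and uu: "u\<^sup>2 = r * N - a + e"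
    and e: "0 \<le> e" "e \<le> 1/2"
    and N: "N - 1 \<ge> 4 * r ^ 3 + 4 * \<bar>a\<bar> * (r - 1)"
  shows "2 * u * ((r - 1) / 2 + u) \<le> (r - 1/2 + e) * (((r - 1) / 2 + u)\<^sup>2 / (r - 1) + N - r)"
proof -
  define K where "K = r - 1"
  define d where "d = r - 1/2 + e"
  have K: "K \<ge> 1" and rK: "r = K + 1" using r by (auto simp: K_def)
  have expand: "K * (d * ((K/2 + u)\<^sup>2 / K + N - r) - 2 * u * (K/2 + u))
      = d * K\<^sup>2 / 4 + (1/2 + e) * K * u + ((1/2 + e) * (2 * K + 1) - K) * N
        + (K - 1/2 - e) * (a - e) - d * r * K"
  proof -
    have "(K/2 + u)\<^sup>2 / K = K/4 + u + u\<^sup>2 / K" using K by (simp add: field_simps power2_eq_square)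
    then have "K * (d * ((K/2 + u)\<^sup>2 / K + N - r) - 2 * u * (K/2 + u))
        = d * K\<^sup>2 / 4 + (d - K) * K * u + (d - 2 * K) * u\<^sup>2 + d * K * N - d * r * K"
      using K by (simp add: field_simps power2_eq_square)
    also have "\<dots> = d * K\<^sup>2 / 4 + (1/2 + e) * K * u + ((1/2 + e) * (2 * K + 1) - K) * N
        + (K - 1/2 - e) * (a - e) - d * r * K"
      unfolding uu d_def rK by (simp add: field_simps)
    finally show ?thesis .
  qed
  have N2: "N / 2 \<ge> 2 * r ^ 3 + 2 * K * \<bar>a\<bar>" using N unfolding K_def by (simp add: algebra_simps)
  have nonneg: "0 \<le> K * \<bar>a\<bar>" "0 \<le> r ^ 3" "0 \<le> d * K\<^sup>2 / 4" "0 \<le> (1/2 + e) * K * u"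
    using K u e r unfolding d_def rK by auto
  then have N0: "N \<ge> 0" using N2 by linarith
  have coeff: "N / 2 \<le> ((1/2 + e) * (2 * K + 1) - K) * N"
  proof -
    have "1/2 \<le> (1/2 + e) * (2 * K + 1) - K" using e K by (simp add: algebra_simps)
    then show ?thesis using mult_right_mono[OF _ N0, of "1/2"] by simp
  qed
  have const: "- (K * \<bar>a\<bar>) - K / 2 \<le> (K - 1/2 - e) * (a - e)"
  proof -
    have "\<bar>(K - 1/2 - e) * (a - e)\<bar> \<le> K * (\<bar>a\<bar> + 1/2)"
      unfolding abs_mult using K e by (intro mult_mono) auto
    then show ?thesis by (simp add: algebra_simps)
  qed
  have drK: "d * r * K \<le> r ^ 3"
  proof -
    have "d * K \<le> r * r" using e K unfolding d_def rK by (intro mult_mono) auto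
    then have "r * (d * K) \<le> r * (r * r)" using r by (intro mult_left_mono) auto
    then show ?thesis by (simp add: power3_eq_cube mult_ac)
  qed
  have cube: "r ^ 3 \<ge> K / 2"
    using power_increasing[of 1 3 r] r unfolding rK by simp
  have "K * (d * ((K/2 + u)\<^sup>2 / K + N - r) - 2 * u * (K/2 + u)) \<ge> 0"
    unfolding expand using nonneg coeff const drK cube N2 by linarith
  then show ?thesis using K unfolding d_def K_def by (simp add: zero_le_mult_iff)
qed

lemma step_map_lower_bound:
  fixes r N a e y :: real
  assumes r: "r \<ge> 2" and e: "0 \<le> e" "e \<le> 1/2"
    and N: "N - 1 \<ge> 4 * r ^ 3 + 4 * \<bar>a\<bar> * (r - 1)"
    and y: "y \<ge> (r - 1) / 2 + sqrt (r * N - a + e)"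
  shows "step_map (r - 1) (N - r) y \<ge> (r - 1) / 2 + sqrt (r * (N - 1) - a + 1/2)"
proof -
  define c where "c = (r - 1) / 2"
  define u where "u = sqrt (r * N - a + e)"
  define d where "d = r - 1/2 + e"
  define D where "D = (c + u)\<^sup>2 / (r - 1) + N - r"
  have "\<bar>a\<bar> * 1 \<le> \<bar>a\<bar> * (4 * (r - 1))" using r by (intro mult_left_mono) auto
  then have "4 * r ^ 3 \<ge> r" "4 * \<bar>a\<bar> * (r - 1) \<ge> \<bar>a\<bar>"
    using r power_increasing[of 1 3 r] by (auto simp: algebra_simps)
  then have N_ge: "N \<ge> 1 + r + \<bar>a\<bar>" using N by linarith
  then have "r * N \<ge> r * (1 + \<bar>a\<bar>)" using r by (intro mult_left_mono) auto
  then have "r * N - a \<ge> r" using r abs_ge_self[of a] mult_right_mono[of 1 r "\<bar>a\<bar>"]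
    by (simp add: algebra_simps)
  then have u_sq: "u\<^sup>2 = r * N - a + e" and u: "u > 0" and d: "0 \<le> d" "d \<le> u\<^sup>2"
    using r e by (auto simp: u_def d_def)
  have "(c + u)\<^sup>2 / (r - 1) \<ge> 0" using r by simp
  then have "D > 0" using N_ge by (simp add: D_def)
  have "2 * u * (c + u) \<le> d * D"
    using denominator_bound[OF r less_imp_le[OF u] u_sq e N] by (simp add: c_def d_def D_def)
  then have "c + sqrt (u\<^sup>2 - d) \<le> (c + u) * (1 - 1 / D)"
    using add_sqrt_diff_le_mult_one_minus_inverse[OF _ u d \<open>D > 0\<close>] r by (simp add: c_def)
  also have "\<dots> = step_map (r - 1) (N - r) (c + u)" by (simp add: step_map_def D_def)
  also have "\<dots> \<le> step_map (r - 1) (N - r) y"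
    using y u r N_ge by (intro step_map_mono) (auto simp: c_def u_def)
  finally show ?thesis by (simp add: u_sq d_def c_def algebra_simps)
qed

theorem lemma4:
  fixes a :: real and k n s :: nat and x :: "nat \<Rightarrow> real"
  assumes hk: "k \<ge> 2" and hs: "s \<ge> 1"
    and hn: "real n - real s \<ge> 4 * real k ^ 3 + 4 * \<bar>a\<bar> * (real k - 1)"
    and hx0: "x 0 \<ge> (real k - 1) / 2 + sqrt (real k * real n - a)"
    and hrec: "\<And>i. i < s \<Longrightarrow>
       x (Suc i) \<ge> x i * (1 - 1 / ((x i)\<^sup>2 / (real k - 1) + real n - real i - real k))"
  shows "\<forall>i\<in>{1..s}. x i \<ge> (real k - 1) / 2 + sqrt (real k * (real n - real i) - a + 1/2)"
proof -
  have k: "real k \<ge> 2" using hk by simp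
  have advance: "x (Suc i) \<ge> (real k - 1) / 2 + sqrt (real k * (real n - real (Suc i)) - a + 1/2)"
    if "i < s" "x i \<ge> (real k - 1) / 2 + sqrt (real k * (real n - real i) - a + e)"
      "0 \<le> e" "e \<le> 1/2" for i e
  proof -
    have "step_map (real k - 1) (real n - real i - real k) (x i) \<le> x (Suc i)"
      using hrec[OF \<open>i < s\<close>] by (simp add: step_map_def diff_add_eq add_diff_eq)
    moreover have "real n - real i - 1 \<ge> 4 * real k ^ 3 + 4 * \<bar>a\<bar> * (real k - 1)"
      using hn \<open>i < s\<close> by linarith
    ultimately show ?thesis
      using step_map_lower_bound[OF k \<open>0 \<le> e\<close> \<open>e \<le> 1/2\<close> _ that(2)] by (simp add: algebra_simps)
  qed
  show ?thesis
  proof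
    fix i assume "i \<in> {1..s}"
    then have "1 \<le> i" "i \<le> s" by auto
    then show "x i \<ge> (real k - 1) / 2 + sqrt (real k * (real n - real i) - a + 1/2)"
    proof (induction i rule: dec_induct)
      case base
      show ?case using advance[of 0 0] hx0 hs by simp
    next
      case (step i)
      then show ?case using advance[of i "1/2"] by simp
    qed
  qed
qed

end
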